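(* Let $N\ge 1$, let $\lambda,\mu$ be parameters, and let $\psi(\xi)=\xi\log\xi-\xi$. For $y,z\in\mathbb{R}^N$ (indices modulo $N$) define $$\Lambda(y,z;\nu)=\sum_{k=1}^N\psi(z_k-y_k)-\sum_{k=1}^N\psi(\nu+y_{k+1}-z_k).$$ Let $x,\widetilde{x},\widehat{x},\widehat{\widetilde{x}}\in\mathbb{R}^N$ (indices modulo $N$, all arguments of $\psi$ below lying in its domain) satisfy for all $k$ the corner equations $$(E)\ (\widetilde{x}_k-x_k)(\lambda+x_k-\widetilde{x}_{k-1})=(\widehat{x}_k-x_k)(\mu+x_k-\widehat{x}_{k-1}),$$ $$(E_1)\ (\widetilde{x}_k-x_k)(\lambda+x_{k+1}-\widetilde{x}_k)=(\widehat{\widetilde{x}}_k-\widetilde{x}_k)(\mu+\widetilde{x}_k-\widehat{\widetilde{x}}_{k-1}),$$ $$(E_2)\ (\widehat{x}_k-x_k)(\mu+x_{k+1}-\widehat{x}_k)=(\widehat{\widetilde{x}}_k-\widehat{x}_k)(\lambda+\widehat{x}_k-\widehat{\widetilde{x}}_{k-1}),$$ $$(E_{12})\ (\widehat{\widetilde{x}}_k-\widehat{x}_k)(\lambda+\widehat{x}_{k+1}-\widehat{\widetilde{x}}_k)=(\widehat{\widetilde{x}}_k-\widetilde{x}_k)(\mu+\widetilde{x}_{k+1}-\widehat{\widetilde{x}}_k).$$ Then the discrete multi-time Lagrangian 1-form is closed on this solution: $$\Lambda(x,\widetilde{x};\lambda)+\Lambda(\widetilde{x},\widehat{\widetilde{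x}};\mu)-\Lambda(x,\widehat{x};\mu)-\Lambda(\widehat{x},\widehat{\widetilde{x}};\lambda)=0.$$
   Context: $\Lambda(\cdot,\cdot;\nu)$ is the generating function of the Bäcklund transformation $F_\nu$ of the periodic dual Toda lattice $\ddot x_k=\dot x_k(x_{k+1}-2x_k+x_{k-1})$ via $p=-\partial\Lambda/\partial x$, $\widetilde p=\partial\Lambda/\partial\widetilde x$; the corner equations are obtained by eliminating momenta. Only periodic boundary conditions are considered. *)

theory Defs
  imports Complex_Main
begin

text \<open>Vectors in R^N with indices modulo N are represented as N-periodic
functions int => real.\<close>

definition periodic :: "nat \<Rightarrow> (int \<Rightarrow> real) \<Rightarrow> bool" where
  "periodic N y \<longleftrightarrow> (\<forall>k. y (k + int N) = y k)"

definition psi :: "real \<Rightarrow> real" where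
  "psi \<xi> = \<xi> * ln \<xi> - \<xi>"

definition Lam :: "nat \<Rightarrow> (int \<Rightarrow> real) \<Rightarrow> (int \<Rightarrow> real) \<Rightarrow> real \<Rightarrow> real" where
  "Lam N y z \<nu> = (\<Sum>k=1..int N. psi (z k - y k)) - (\<Sum>k=1..int N. psi (\<nu> + y (k+1) - z k))"

definition Lam_dom :: "nat \<Rightarrow> (int \<Rightarrow> real) \<Rightarrow> (int \<Rightarrow> real) \<Rightarrow> real \<Rightarrow> bool" where
  "Lam_dom N y z \<nu> \<longleftrightarrow> (\<forall>k\<in>{1..int N}. z k - y k > 0 \<and> \<nu> + y (k+1) - z k > 0)"

end

theory Submission
  imports Defs
begin

text \<open>Since \<open>psi t = t ln t - t\<close>, each corner equation, an equality of products of
  arguments of \<open>psi\<close>, becomes an additive relation between their logarithms. The equations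
  (E), (E1), (E2) also give a first-order recurrence for
  \<open>gap k = lam - mu + xh k - xt k\<close> with positive coefficients. With these relations the
  contribution of site \<open>k\<close> to the closure sum is a difference \<open>G (k+1) - G k\<close> of an
  explicit periodic potential \<open>G\<close> involving \<open>ln \<bar>gap k\<bar>\<close>, so the sum over a period
  vanishes. By the recurrence, if \<open>gap\<close> vanishes at one site it vanishes everywhere, which
  forces \<open>lam = mu\<close> and \<open>xh = xt\<close>, a trivial case.\<close>

lemma periodic_shift_mult:
  assumes "periodic N y"
  shows "y (k + m * int N) = y k"
proof (induction m rule: int_induct[where k=0])
  case (step1 i)
  have "y (k + (i + 1) * int N) = y ((k + i * int N) + int N)" by (simp add: algebra_simps)
  with assms step1 show ?case unfolding periodic_def by simp
next
  case (step2 i)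
  have "y (k + i * int N) = y ((k + (i - 1) * int N) + int N)" by (simp add: algebra_simps)
  with assms step2 show ?case unfolding periodic_def by simp
qed simp

lemma ex_period_representative:
  assumes "N \<ge> 1"
  obtains r m where "r \<in> {1..int N}" "k = r + m * int N"
proof
  have "int N > 0" using assms by simp
  then show "(k - 1) mod int N + 1 \<in> {1..int N}"
    using pos_mod_bound[of "int N" "k - 1"] pos_mod_sign[of "int N" "k - 1"]
    unfolding atLeastAtMost_iff by linarith
  show "k = ((k - 1) mod int N + 1) + ((k - 1) div int N) * int N"
    using div_mult_mod_eq[of "k - 1" "int N"] by linarith
qed

lemma Lam_dom_periodic:
  assumes "N \<ge> 1" "periodic N y" "periodic N z" "Lam_dom N y z \<nu>"
  shows "z k - y k > 0" "\<nu> + y (k + 1) - z k > 0"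
proof -
  obtain r m where r: "r \<in> {1..int N}" and k: "k = r + m * int N"
    using ex_period_representative[OF assms(1)] .
  have "y k = y r" "z k = z r" "y (k + 1) = y (r + 1)"
    using periodic_shift_mult[OF assms(2)] periodic_shift_mult[OF assms(3)]
      periodic_shift_mult[OF assms(2), of "r + 1" m]
    by (simp_all add: k algebra_simps)
  then show "z k - y k > 0" "\<nu> + y (k + 1) - z k > 0"
    using assms(4) r unfolding Lam_dom_def by auto
qed

lemma sum_diff_periodic:
  fixes G :: "int \<Rightarrow> real"
  assumes "periodic N G"
  shows "(\<Sum>k=1..int N. G (k + 1) - G k) = 0"
proof -
  have "(\<Sum>k=1..int n. G (k + 1) - G k) = G (int n + 1) - G 1" for n
  proof (induction n)
    case (Suc n)
    have "{1..int (Suc n)} = insert (int n + 1) {1..int n}" by auto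
    with Suc show ?case by simp
  qed simp
  moreover have "G (int N + 1) = G 1"
    using assms unfolding periodic_def by (metis add.commute)
  ultimately show ?thesis by simp
qed

lemma zero_propagates:
  fixes f a b :: "int \<Rightarrow> real"
  assumes rec: "\<And>k. a k * f (k + 1) = b k * f k"
    and "\<And>k. a k \<noteq> 0" "\<And>k. b k \<noteq> 0" and "f j = 0"
  shows "f k = 0"
proof (induction k rule: int_induct[where k=j])
  case (step1 i)
  then show ?case using rec[of i] assms(2) by simp
next
  case (step2 i)
  then show ?case using rec[of "i - 1"] assms(3) by simp
qed (rule assms(4))

lemma ln_mult_eq:
  fixes a b c d :: real
  assumes "a > 0" "b > 0" "c > 0" "d > 0" "a * b = c * d"
  shows "ln a + ln b = ln c + ln d"
proof -
  have "ln (a * b) = ln (c * d)" using assms(5) by simp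
  with assms(1-4) show ?thesis by (simp add: ln_mult)
qed

lemma corner_factorization:
  fixes lam mu x0 x1 t0 tm h0 hm q0 qm :: real
  assumes E: "(t0 - x0) * (lam + x0 - tm) = (h0 - x0) * (mu + x0 - hm)"
    and E1: "(t0 - x0) * (lam + x1 - t0) = (q0 - t0) * (mu + t0 - qm)"
    and E2: "(h0 - x0) * (mu + x1 - h0) = (q0 - h0) * (lam + h0 - qm)"
  shows "(t0 - x0) * ((lam + x1 - t0) + (mu + t0 - qm)) *
    ((mu + x0 - hm) * (lam - mu + h0 - t0) - (mu + t0 - qm) * (lam - mu + hm - tm)) = 0"
  using E E1 E2 by algebra

locale corner_solution =
  fixes N :: nat and lam mu :: real and x xt xh xht :: "int \<Rightarrow> real"
  assumes N: "N \<ge> 1"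
    and per: "periodic N x" "periodic N xt" "periodic N xh" "periodic N xht"
    and dom: "Lam_dom N x xt lam" "Lam_dom N xt xht mu" "Lam_dom N x xh mu" "Lam_dom N xh xht lam"
    and E: "\<And>k. (xt k - x k) * (lam + x k - xt (k-1)) = (xh k - x k) * (mu + x k - xh (k-1))"
    and E1: "\<And>k. (xt k - x k) * (lam + x (k+1) - xt k) = (xht k - xt k) * (mu + xt k - xht (k-1))"
    and E2: "\<And>k. (xh k - x k) * (mu + x (k+1) - xh k) = (xht k - xh k) * (lam + xh k - xht (k-1))"
    and E12: "\<And>k. (xht k - xh k) * (lam + xh (k+1) - xht k) = (xht k - xt k) * (mu + xt (k+1) - xht k)"
begin

lemmas dom_x_xt = Lam_dom_periodic[OF N per(1) per(2) dom(1)]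
lemmas dom_xt_xht = Lam_dom_periodic[OF N per(2) per(4) dom(2)]
lemmas dom_x_xh = Lam_dom_periodic[OF N per(1) per(3) dom(3)]
lemmas dom_xh_xht = Lam_dom_periodic[OF N per(3) per(4) dom(4)]

definition gap :: "int \<Rightarrow> real" where
  "gap k = lam - mu + xh k - xt k"

lemma gap_recurrence_mu:
  "(mu + x (k+1) - xh k) * gap (k+1) = (mu + xt (k+1) - xht k) * gap k"
proof -
  have "(xt (k+1) - x (k+1)) * ((lam + x (k+1+1) - xt (k+1)) + (mu + xt (k+1) - xht k)) *
     ((mu + x (k+1) - xh k) * gap (k+1) - (mu + xt (k+1) - xht k) * gap k) = 0"
    using corner_factorization[OF E[of "k+1"] E1[of "k+1"] E2[of "k+1"]] by (simp add: gap_def)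
  moreover have "(xt (k+1) - x (k+1)) * ((lam + x (k+1+1) - xt (k+1)) + (mu + xt (k+1) - xht k)) \<noteq> 0"
    using dom_x_xt[of "k+1"] dom_xt_xht[of k] by simp
  ultimately show ?thesis by simp
qed

lemma gap_recurrence_lam:
  "(lam + x (k+1) - xt k) * gap (k+1) = (lam + xh (k+1) - xht k) * gap k"
  using gap_recurrence_mu[of k] unfolding gap_def by algebra

lemma gap_zero_imp_trivial:
  assumes "gap j = 0"
  shows "lam = mu" "xh = xt"
proof -
  have "gap k = 0" for k
  proof (rule zero_propagates)
    show "(mu + x (k+1) - xh k) * gap (k+1) = (mu + xt (k+1) - xht k) * gap k" for k
      by (rule gap_recurrence_mu)
    show "mu + x (k+1) - xh k \<noteq> 0" "mu + xt (k+1) - xht k \<noteq> 0" for k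
      using dom_x_xh(2)[of k] dom_xt_xht(2)[of k] by simp_all
  qed (rule assms)
  then have xh: "xh k = xt k + mu - lam" for k
    unfolding gap_def by (simp add: algebra_simps)
  have "(lam - mu) * (lam + x 1 - xt 0) = 0"
    using E[of 1] unfolding xh by (simp add: algebra_simps)
  with dom_x_xt(2)[of 0] show "lam = mu" by simp
  with xh show "xh = xt" by auto
qed

definition potential :: "int \<Rightarrow> real" where
  "potential k = - x k * (ln (lam + x k - xt (k-1)) - ln (mu + x k - xh (k-1)))
     - xt k * ln (mu + xt k - xht (k-1)) + xh k * ln (lam + xh k - xht (k-1)) + xt k - xh k
     + (lam - mu) * ln \<bar>gap k\<bar>"

lemma potential_periodic: "periodic N potential"
proof -
  have shift: "y (k + int N - 1) = y (k - 1)" "y (k + int N) = y k" if "periodic N y" for y k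
    using that unfolding periodic_def by (metis diff_add_eq, blast)
  show ?thesis
    unfolding periodic_def potential_def gap_def by (simp add: shift per)
qed

lemma site_sum_eq_potential_diff:
  assumes "\<And>k. gap k \<noteq> 0"
  shows "psi (xt k - x k) - psi (lam + x (k+1) - xt k) + psi (xht k - xt k)
    - psi (mu + xt (k+1) - xht k) - psi (xh k - x k) + psi (mu + x (k+1) - xh k)
    - psi (xht k - xh k) + psi (lam + xh (k+1) - xht k) = potential (k+1) - potential k"
proof -
  note pos = dom_x_xt[of k] dom_x_xt[of "k-1"] dom_xt_xht[of k] dom_xt_xht[of "k-1"]
    dom_x_xh[of k] dom_x_xh[of "k-1"] dom_xh_xht[of k] dom_xh_xht[of "k-1"]
  have gap_abs: "\<bar>gap k\<bar> > 0" "\<bar>gap (k+1)\<bar> > 0" using assms by simp_all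
  have "ln (xt k - x k) + ln (lam + x k - xt (k-1)) = ln (xh k - x k) + ln (mu + x k - xh (k-1))"
    by (rule ln_mult_eq) (use E[of k] pos in simp_all)
  moreover have "ln (xt k - x k) + ln (lam + x (k+1) - xt k) = ln (xht k - xt k) + ln (mu + xt k - xht (k-1))"
    by (rule ln_mult_eq) (use E1[of k] pos in simp_all)
  moreover have "ln (xh k - x k) + ln (mu + x (k+1) - xh k) = ln (xht k - xh k) + ln (lam + xh k - xht (k-1))"
    by (rule ln_mult_eq) (use E2[of k] pos in simp_all)
  moreover have "ln (xht k - xh k) + ln (lam + xh (k+1) - xht k) = ln (xht k - xt k) + ln (mu + xt (k+1) - xht k)"
    by (rule ln_mult_eq) (use E12[of k] pos in simp_all)
  moreover have "ln (lam + x (k+1) - xt k) + ln \<bar>gap (k+1)\<bar> = ln (lam + xh (k+1) - xht k) + ln \<bar>gap k\<bar>"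
    by (rule ln_mult_eq)
      (use arg_cong[OF gap_recurrence_lam[of k], of abs] pos gap_abs in \<open>simp_all add: abs_mult\<close>)
  moreover have "ln (mu + x (k+1) - xh k) + ln \<bar>gap (k+1)\<bar> = ln (mu + xt (k+1) - xht k) + ln \<bar>gap k\<bar>"
    by (rule ln_mult_eq)
      (use arg_cong[OF gap_recurrence_mu[of k], of abs] pos gap_abs in \<open>simp_all add: abs_mult\<close>)
  ultimately show ?thesis
    unfolding psi_def potential_def by simp algebra
qed

theorem Lam_closure:
  "Lam N x xt lam + Lam N xt xht mu - Lam N x xh mu - Lam N xh xht lam = 0"
proof (cases "\<exists>j. gap j = 0")
  case True
  then obtain j where "gap j = 0" by blast
  then have "lam = mu" "xh = xt" by (rule gap_zero_imp_trivial)+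
  then show ?thesis by simp
next
  case False
  have "Lam N x xt lam + Lam N xt xht mu - Lam N x xh mu - Lam N xh xht lam =
    (\<Sum>k=1..int N. psi (xt k - x k) - psi (lam + x (k+1) - xt k) + psi (xht k - xt k)
      - psi (mu + xt (k+1) - xht k) - psi (xh k - x k) + psi (mu + x (k+1) - xh k)
      - psi (xht k - xh k) + psi (lam + xh (k+1) - xht k))"
    unfolding Lam_def by (simp add: sum.distrib sum_subtractf)
  also have "\<dots> = (\<Sum>k=1..int N. potential (k+1) - potential k)"
    using site_sum_eq_potential_diff False by simp
  also have "\<dots> = 0"
    by (rule sum_diff_periodic[OF potential_periodic])
  finally show ?thesis .
qed

end

theorem theorem5:
  fixes N :: nat and lam mu :: real and x xt xh xht :: "int \<Rightarrow> real"
  assumes N: "N \<ge> 1"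
    and per: "periodic N x" "periodic N xt" "periodic N xh" "periodic N xht"
    and dom: "Lam_dom N x xt lam" "Lam_dom N xt xht mu" "Lam_dom N x xh mu" "Lam_dom N xh xht lam"
    and E: "\<And>k. (xt k - x k) * (lam + x k - xt (k-1)) = (xh k - x k) * (mu + x k - xh (k-1))"
    and E1: "\<And>k. (xt k - x k) * (lam + x (k+1) - xt k) = (xht k - xt k) * (mu + xt k - xht (k-1))"
    and E2: "\<And>k. (xh k - x k) * (mu + x (k+1) - xh k) = (xht k - xh k) * (lam + xh k - xht (k-1))"
    and E12: "\<And>k. (xht k - xh k) * (lam + xh (k+1) - xht k) = (xht k - xt k) * (mu + xt (k+1) - xht k)"
  shows "Lam N x xt lam + Lam N xt xht mu - Lam N x xh mu - Lam N xh xht lam = 0"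
proof -
  interpret corner_solution N lam mu x xt xh xht
    using assms by unfold_locales
  show ?thesis by (rule Lam_closure)
qed

end
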